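(* Let $f:\mathbb{R}^{N}\rightarrow (-\infty ,\infty ]$ with $m_{f}:=\inf f>-\infty$, and suppose there are constants $c>0$ and $\alpha>0$ such that $f(x)\geq h(x):=c|x|^{\alpha }$ for $|x|$ large enough. Then for every $z<m_{f}$, every open ball $B$ centered at the origin such that $f\geq h\geq 2z$ outside $B$, and every Young function $\phi$, $$\|(\check{f}-z)^{-1}\|_{\phi }\leq 2\|h^{-1}\|_{\phi ,\mathbb{R}^{N}\setminus B}+(m_{f}-z)^{-1}\|\chi_{B}\|_{\phi }.$$ If $\phi$ is invertible with inverse $\psi$, this also reads $$\|(\check{f}-z)^{-1}\|_{\phi }\leq 2\|h^{-1}\|_{\phi ,\mathbb{R}^{N}\setminus B}+(m_{f}-z)^{-1}[\psi(\mu_{N}(B)^{-1})]^{-1}.$$ In particular, if $\|h^{-1}\|_{\phi,\mathbb{R}^{N}\setminus B}<\infty$, then $\|(\check{f}-z)^{-1}\|_\phi<\infty$.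
   Context: $\mu_N$ is Lebesgue measure, $\chi_B$ the indicator function of $B$. For $k\ge0$, $k^{-1}:=1/k$ (with $1/0=\infty$). A Young function is a nonconstant $\phi:[0,\infty]\to[0,\infty]$ with $\phi(0)=0$, nondecreasing, convex and left continuous; for measurable $k$ on a measurable set $E\subset\mathbb{R}^N$, $\|k\|_{\phi,E}:=\inf\{r>0:\int_{E}\phi(r^{-1}|k|)\le 1\}$ ($=\infty$ if no such $r$), and $\|k\|_\phi:=\|k\|_{\phi,\mathbb{R}^N}$. Enclosing balls: for nonempty bounded $X\subset\mathbb{R}^N$, $\overline{B}_X$ is the unique closed ball of minimal diameter containing $X$; $\overline{B}_X:=\mathbb{R}^N$ if $X$ unbounded; $\overline{B}_\emptyset:=\{0\}$. For $f:\mathbb{R}^N\to[-\infty,\infty]$, $\rho^-_f(\xi)\in[0,\infty]$ is the radius of $\overline{B}_{\{f<\xi\}}$, $\gamma^-_f(t):=\sup\{\xi:\rho^-_f(\xi)\le t\}$ for $t\ge0$, and $\check f(x):=\gamma^-_f(|x|)$. *)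

theory Defs
  imports "HOL-Analysis.Analysis"
begin

definition young_function :: "(ennreal \<Rightarrow> ennreal) \<Rightarrow> bool" where
  "young_function \<phi> \<longleftrightarrow>
     (\<exists>x y. \<phi> x \<noteq> \<phi> y) \<and>
     \<phi> 0 = 0 \<and>
     mono \<phi> \<and>
     (\<forall>x y (t::real). 0 \<le> t \<and> t \<le> 1 \<longrightarrow>
        \<phi> (ennreal t * x + ennreal (1 - t) * y) \<le> ennreal t * \<phi> x + ennreal (1 - t) * \<phi> y) \<and>
     (\<forall>x. (\<phi> \<longlongrightarrow> \<phi> x) (at_left x))"

(* Luxemburg-type norm ||k||_{phi,E} := inf {r>0 : int_E phi(r^{-1}|k|) <= 1}, = \<infinity> if no such r *)
definition orlicz_norm ::
  "(ennreal \<Rightarrow> ennreal) \<Rightarrow> ('a::euclidean_space) set \<Rightarrow> ('a \<Rightarrow> ennreal) \<Rightarrow> ennreal" where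
  "orlicz_norm \<phi> E k =
     Inf {ennreal r | r::real. 0 < r \<and>
            (\<integral>\<^sup>+ x. \<phi> (ennreal (1 / r) * k x) * indicator E x \<partial>lebesgue) \<le> 1}"

(* radius of the minimal enclosing closed ball of X (0 for X = {}, \<infinity> for X unbounded) *)
definition enc_radius :: "('a::euclidean_space) set \<Rightarrow> ennreal" where
  "enc_radius X = Inf {ennreal r | r c. 0 \<le> r \<and> X \<subseteq> cball c r}"

definition rho_minus :: "('a::euclidean_space \<Rightarrow> ereal) \<Rightarrow> ereal \<Rightarrow> ennreal" where
  "rho_minus f \<xi> = enc_radius {x. f x < \<xi>}"

definition gamma_minus :: "('a::euclidean_space \<Rightarrow> ereal) \<Rightarrow> real \<Rightarrow> ereal" where
  "gamma_minus f t = Sup {\<xi>. rho_minus f \<xi> \<le> ennreal t}"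

definition check_fun :: "('a::euclidean_space \<Rightarrow> ereal) \<Rightarrow> 'a \<Rightarrow> ereal" where
  "check_fun f x = gamma_minus f (norm x)"

end

theory Submission
  imports Defs
begin

text \<open>
  Pointwise, \<open>(f\<^sup>\<or> - z)\<^sup>-\<^sup>1 \<le> 2 h\<^sup>-\<^sup>1 \<chi>\<^bsub>\<real>\<^sup>N\<setminus>B\<^esub> + (m\<^sub>f - z)\<^sup>-\<^sup>1 \<chi>\<^sub>B\<close>: on \<open>B\<close> because
  \<open>f\<^sup>\<or> \<ge> inf f\<close>, and off \<open>B\<close> because \<open>f\<^sup>\<or>(x) \<ge> h(x)\<close> (as \<open>h\<close> is radially increasing and
  \<open>f \<ge> h\<close> off \<open>B\<close>, the sublevel set \<open>{f < h(x)}\<close> lies in the closed ball of radius \<open>|x|\<close>)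
  while \<open>h - z \<ge> h/2\<close>. The Luxemburg norm is monotone, positively homogeneous and, by
  convexity of \<open>\<phi>\<close>, subadditive, which gives the first inequality. For invertible \<open>\<phi>\<close> the
  radius \<open>1/\<psi>(\<mu>(B)\<^sup>-\<^sup>1)\<close> is admissible for \<open>\<chi>\<^sub>B\<close>. Finally, a Young function may be
  infinite on all of \<open>(0,\<infinity>]\<close>, and then \<open>\<parallel>\<chi>\<^sub>B\<parallel>\<^sub>\<phi> = \<infinity>\<close>; but a finite \<open>\<parallel>h\<^sup>-\<^sup>1\<parallel>\<^sub>\<phi>\<close> forces \<open>\<phi>\<close>
  to be finite somewhere, since \<open>h\<^sup>-\<^sup>1\<close> is bounded below on a ball outside \<open>B\<close>, and then
  \<open>\<parallel>\<chi>\<^sub>B\<parallel>\<^sub>\<phi>\<close> is finite by convexity.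
\<close>

lemma ennreal_inverse_antimono:
  fixes x y :: ennreal
  assumes "x \<le> y"
  shows "inverse y \<le> inverse x"
proof (cases x rule: ennreal_cases)
  case (real r)
  with assms show ?thesis
    by (cases "r = 0"; cases y rule: ennreal_cases)
       (auto simp: inverse_ennreal le_imp_inverse_le ennreal_le_iff top_unique)
qed (use assms in \<open>simp add: top_unique\<close>)

lemma ennreal_mult_Inf:
  fixes c :: ennreal
  assumes "c < top" "X \<noteq> {}"
  shows "c * Inf X = (INF x\<in>X. c * x)"
proof -
  have "continuous_on UNIV (\<lambda>x. c * x)"
    using ennreal_continuous_on_cmult[OF assms(1) continuous_on_id] by simp
  then have "continuous (at_right (Inf X)) (\<lambda>x. c * x)"
    by (simp add: continuous_on_eq_continuous_within continuous_at_imp_continuous_at_within)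
  then show ?thesis
    using continuous_at_Inf_mono[of "\<lambda>x. c * x" X] assms(2) by (auto simp: mono_def mult_left_mono)
qed

lemma ennreal_Inf_add_le:
  fixes L :: ennreal
  assumes "\<And>x y. x \<in> X \<Longrightarrow> y \<in> Y \<Longrightarrow> L \<le> x + y"
  shows "L \<le> Inf X + Inf Y"
proof (cases "X = {} \<or> Y = {}")
  case False
  have cont: "continuous (at_right t) (\<lambda>x::ennreal. x + c)" for t c
    by (intro continuous_intros)
  have "Inf X + y = (INF x\<in>X. x + y)" for y
    using continuous_at_Inf_mono[of "\<lambda>x. x + y" X] False cont by (auto simp: mono_def add_right_mono)
  moreover have "Inf X + Inf Y = (INF y\<in>Y. Inf X + y)"
    using continuous_at_Inf_mono[of "\<lambda>y. Inf X + y" Y] False cont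
    by (auto simp: mono_def add_left_mono add.commute)
  ultimately show ?thesis
    using assms by (auto intro!: INF_greatest)
qed (auto simp: top_unique)

lemma borel_measurable_mono_complete_linorder:
  fixes f :: "'a::{complete_linorder,linorder_topology} \<Rightarrow> 'b::{linorder_topology,second_countable_topology}"
  assumes "mono f"
  shows "f \<in> borel_measurable borel"
proof (rule borel_measurableI_greater)
  fix a
  define U where "U = {x. a < f x}"
  define b where "b = Inf U"
  have up: "y \<in> U" if "u \<in> U" "u \<le> y" for u y
    using less_le_trans[of a "f u" "f y"] monoD[OF assms that(2)] that(1) by (simp add: U_def)
  have lower: "b \<le> x" if "x \<in> U" for x
    unfolding b_def using that by (rule Inf_lower)
  have "U = {b..} \<or> U = {b<..}"
  proof (cases "b \<in> U")
    case True
    have "U = {b..}"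
      using lower up[OF True] by auto
    then show ?thesis ..
  next
    case False
    have "x \<in> U" if "b < x" for x
    proof -
      obtain u where "u \<in> U" "u < x" using \<open>b < x\<close> by (auto simp: b_def Inf_less_iff)
      then show ?thesis using up by (simp add: less_imp_le)
    qed
    moreover have "b < x" if "x \<in> U" for x
      using lower[OF that] False that by (auto simp: order.order_iff_strict)
    ultimately have "U = {b<..}" by auto
    then show ?thesis ..
  qed
  then show "{x \<in> space borel. a < f x} \<in> sets borel" by (auto simp: U_def[symmetric])
qed

section \<open>Young functions and the Luxemburg norm\<close>

lemma young_functionD:
  assumes "young_function \<phi>"
  shows young_function_zero: "\<phi> 0 = 0"
    and young_function_mono: "mono \<phi>"
    and young_function_convex:
      "0 \<le> t \<Longrightarrow> t \<le> 1 \<Longrightarrow> \<phi> (ennreal t * x + ennreal (1 - t) * y) \<le> ennreal t * \<phi> x + ennreal (1 - t) * \<phi> y"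
  using assms unfolding young_function_def by auto

lemma young_function_scale:
  assumes "young_function \<phi>" "0 \<le> t" "t \<le> 1"
  shows "\<phi> (ennreal t * x) \<le> ennreal t * \<phi> x"
  using young_function_convex[OF assms, of x 0] young_function_zero[OF assms(1)] by simp

lemma young_function_borel_measurable:
  "young_function \<phi> \<Longrightarrow> \<phi> \<in> borel_measurable borel"
  by (intro borel_measurable_mono_complete_linorder young_function_mono)

definition orlicz_admissible ::
  "(ennreal \<Rightarrow> ennreal) \<Rightarrow> ('a::euclidean_space) set \<Rightarrow> ('a \<Rightarrow> ennreal) \<Rightarrow> real \<Rightarrow> bool" where
  "orlicz_admissible \<phi> E k r \<longleftrightarrow>
     0 < r \<and> (\<integral>\<^sup>+ x. \<phi> (ennreal (1 / r) * k x) * indicator E x \<partial>lebesgue) \<le> 1"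

lemma orlicz_norm_eq_INF:
  "orlicz_norm \<phi> E k = (INF r \<in> Collect (orlicz_admissible \<phi> E k). ennreal r)"
  unfolding orlicz_norm_def orlicz_admissible_def by (rule arg_cong[where f = Inf]) blast

lemma orlicz_norm_le: "orlicz_admissible \<phi> E k r \<Longrightarrow> orlicz_norm \<phi> E k \<le> ennreal r"
  unfolding orlicz_norm_eq_INF by (rule INF_lower) simp

lemma orlicz_norm_less_top_imp_admissible:
  assumes "orlicz_norm \<phi> E k < \<infinity>"
  obtains r where "orlicz_admissible \<phi> E k r"
proof -
  have "Collect (orlicz_admissible \<phi> E k) \<noteq> {}"
  proof
    assume empty: "Collect (orlicz_admissible \<phi> E k) = {}"
    show False using assms unfolding orlicz_norm_eq_INF empty by simp
  qed
  then show ?thesis using that by blast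
qed

lemma orlicz_norm_mono:
  assumes "mono \<phi>" "\<And>x. x \<in> E \<Longrightarrow> k x \<le> g x"
  shows "orlicz_norm \<phi> E k \<le> orlicz_norm \<phi> E g"
  unfolding orlicz_norm_eq_INF
proof (rule INF_superset_mono)
  have "(\<integral>\<^sup>+ x. \<phi> (ennreal (1 / r) * k x) * indicator E x \<partial>lebesgue)
        \<le> (\<integral>\<^sup>+ x. \<phi> (ennreal (1 / r) * g x) * indicator E x \<partial>lebesgue)" for r
  proof (intro nn_integral_mono)
    fix x
    show "\<phi> (ennreal (1 / r) * k x) * indicator E x \<le> \<phi> (ennreal (1 / r) * g x) * indicator E x"
    proof (cases "x \<in> E")
      case True
      then have "ennreal (1 / r) * k x \<le> ennreal (1 / r) * g x"
        by (simp add: assms(2) mult_left_mono)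
      then show ?thesis using True monoD[OF assms(1)] by simp
    qed simp
  qed
  then show "Collect (orlicz_admissible \<phi> E g) \<subseteq> Collect (orlicz_admissible \<phi> E k)"
    unfolding orlicz_admissible_def by (auto intro: order_trans)
qed simp

lemma orlicz_norm_restrict:
  assumes "\<phi> 0 = 0"
  shows "orlicz_norm \<phi> E k = orlicz_norm \<phi> UNIV (\<lambda>x. k x * indicator E x)"
proof -
  have "(\<integral>\<^sup>+ x. \<phi> (ennreal (1 / r) * k x) * indicator E x \<partial>lebesgue)
        = (\<integral>\<^sup>+ x. \<phi> (ennreal (1 / r) * (k x * indicator E x)) * indicator UNIV x \<partial>lebesgue)" for r
    using assms by (intro nn_integral_cong) (simp split: split_indicator)
  then show ?thesis
    unfolding orlicz_norm_def by simp
qed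

lemma orlicz_norm_cmult_le:
  assumes "young_function \<phi>" "0 \<le> c"
  shows "orlicz_norm \<phi> E (\<lambda>x. ennreal c * g x) \<le> ennreal c * orlicz_norm \<phi> E g"
proof (cases "c = 0")
  case True
  have "orlicz_admissible \<phi> E (\<lambda>x. ennreal c * g x) e" if "0 < e" for e
    using that True young_function_zero[OF assms(1)] by (simp add: orlicz_admissible_def)
  have "orlicz_norm \<phi> E (\<lambda>x. ennreal c * g x) \<le> 0"
  proof (rule ennreal_le_epsilon)
    fix e :: real
    assume "0 < e"
    then show "orlicz_norm \<phi> E (\<lambda>x. ennreal c * g x) \<le> 0 + ennreal e"
      using orlicz_norm_le \<open>0 < e \<Longrightarrow> _\<close> by simp
  qed
  then show ?thesis by simp
next
  case False
  then have "0 < c" using assms(2) by simp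
  have "orlicz_norm \<phi> E (\<lambda>x. ennreal c * g x) \<le> ennreal c * ennreal r" if "orlicz_admissible \<phi> E g r" for r
  proof -
    have "ennreal (1 / (c * r)) * (ennreal c * g x) = ennreal (1 / r) * g x" for x
      using \<open>0 < c\<close> that
      by (simp add: orlicz_admissible_def mult.assoc[symmetric] ennreal_mult[symmetric])
    then have "orlicz_admissible \<phi> E (\<lambda>x. ennreal c * g x) (c * r)"
      using that \<open>0 < c\<close> by (simp add: orlicz_admissible_def)
    then have "orlicz_norm \<phi> E (\<lambda>x. ennreal c * g x) \<le> ennreal (c * r)"
      by (rule orlicz_norm_le)
    then show ?thesis
      using that \<open>0 < c\<close> by (simp add: orlicz_admissible_def ennreal_mult)
  qed
  then have "orlicz_norm \<phi> E (\<lambda>x. ennreal c * g x) \<le> (INF r \<in> Collect (orlicz_admissible \<phi> E g). ennreal c * ennreal r)"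
    by (intro INF_greatest) simp
  also have "\<dots> = ennreal c * orlicz_norm \<phi> E g"
  proof (cases "Collect (orlicz_admissible \<phi> E g) = {}")
    case True
    then show ?thesis
      unfolding orlicz_norm_eq_INF True using \<open>0 < c\<close> by (simp add: ennreal_mult_top)
  next
    case False
    then show ?thesis
      unfolding orlicz_norm_eq_INF by (subst ennreal_mult_Inf) (simp_all add: image_comp)
  qed
  finally show ?thesis .
qed

lemma orlicz_admissible_add:
  assumes young: "young_function \<phi>" and E: "E \<in> sets lebesgue"
    and meas: "g\<^sub>1 \<in> borel_measurable lebesgue" "g\<^sub>2 \<in> borel_measurable lebesgue"
    and adm: "orlicz_admissible \<phi> E g\<^sub>1 r\<^sub>1" "orlicz_admissible \<phi> E g\<^sub>2 r\<^sub>2"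
  shows "orlicz_admissible \<phi> E (\<lambda>x. g\<^sub>1 x + g\<^sub>2 x) (r\<^sub>1 + r\<^sub>2)"
proof -
  have r: "0 < r\<^sub>1" "0 < r\<^sub>2" using adm by (simp_all add: orlicz_admissible_def)
  define t where "t = r\<^sub>1 / (r\<^sub>1 + r\<^sub>2)"
  have t: "0 \<le> t" "t \<le> 1" "1 - t = r\<^sub>2 / (r\<^sub>1 + r\<^sub>2)"
    using r by (auto simp: t_def field_simps)
  define G\<^sub>1 where "G\<^sub>1 = (\<lambda>x. \<phi> (ennreal (1 / r\<^sub>1) * g\<^sub>1 x) * indicator E x)"
  define G\<^sub>2 where "G\<^sub>2 = (\<lambda>x. \<phi> (ennreal (1 / r\<^sub>2) * g\<^sub>2 x) * indicator E x)"
  note young_function_borel_measurable[OF young, measurable] meas[measurable] E[measurable]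
  have G_meas[measurable]: "G\<^sub>1 \<in> borel_measurable lebesgue" "G\<^sub>2 \<in> borel_measurable lebesgue"
    unfolding G\<^sub>1_def G\<^sub>2_def by measurable
  have split: "ennreal (1 / (r\<^sub>1 + r\<^sub>2)) * (g\<^sub>1 x + g\<^sub>2 x)
      = ennreal t * (ennreal (1 / r\<^sub>1) * g\<^sub>1 x) + ennreal (1 - t) * (ennreal (1 / r\<^sub>2) * g\<^sub>2 x)" for x
    using r t by (simp add: distrib_left mult.assoc[symmetric] ennreal_mult[symmetric] t_def)
  have "\<phi> (ennreal (1 / (r\<^sub>1 + r\<^sub>2)) * (g\<^sub>1 x + g\<^sub>2 x)) * indicator E x \<le> ennreal t * G\<^sub>1 x + ennreal (1 - t) * G\<^sub>2 x" for x
    unfolding split G\<^sub>1_def G\<^sub>2_def using young_function_convex[OF young t(1,2)]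
    by (simp split: split_indicator)
  then have "(\<integral>\<^sup>+ x. \<phi> (ennreal (1 / (r\<^sub>1 + r\<^sub>2)) * (g\<^sub>1 x + g\<^sub>2 x)) * indicator E x \<partial>lebesgue)
      \<le> (\<integral>\<^sup>+ x. ennreal t * G\<^sub>1 x + ennreal (1 - t) * G\<^sub>2 x \<partial>lebesgue)"
    by (rule nn_integral_mono)
  also have "\<dots> = ennreal t * integral\<^sup>N lebesgue G\<^sub>1 + ennreal (1 - t) * integral\<^sup>N lebesgue G\<^sub>2"
    by (simp add: nn_integral_add nn_integral_cmult)
  also have "\<dots> \<le> ennreal t * 1 + ennreal (1 - t) * 1"
    using adm by (intro add_mono mult_left_mono) (simp_all add: orlicz_admissible_def G\<^sub>1_def G\<^sub>2_def)
  also have "\<dots> = 1"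
    using t by (simp add: ennreal_plus[symmetric] del: ennreal_plus)
  finally show ?thesis
    using r by (simp add: orlicz_admissible_def)
qed

lemma orlicz_norm_add_le:
  assumes "young_function \<phi>" "E \<in> sets lebesgue"
    and "g\<^sub>1 \<in> borel_measurable lebesgue" "g\<^sub>2 \<in> borel_measurable lebesgue"
  shows "orlicz_norm \<phi> E (\<lambda>x. g\<^sub>1 x + g\<^sub>2 x) \<le> orlicz_norm \<phi> E g\<^sub>1 + orlicz_norm \<phi> E g\<^sub>2"
  unfolding orlicz_norm_eq_INF[of \<phi> E g\<^sub>1] orlicz_norm_eq_INF[of \<phi> E g\<^sub>2]
proof (rule ennreal_Inf_add_le, safe)
  fix r\<^sub>1 r\<^sub>2
  assume adm: "orlicz_admissible \<phi> E g\<^sub>1 r\<^sub>1" "orlicz_admissible \<phi> E g\<^sub>2 r\<^sub>2"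
  then have "orlicz_norm \<phi> E (\<lambda>x. g\<^sub>1 x + g\<^sub>2 x) \<le> ennreal (r\<^sub>1 + r\<^sub>2)"
    by (intro orlicz_norm_le orlicz_admissible_add assms)
  then show "orlicz_norm \<phi> E (\<lambda>x. g\<^sub>1 x + g\<^sub>2 x) \<le> ennreal r\<^sub>1 + ennreal r\<^sub>2"
    using adm by (simp add: orlicz_admissible_def ennreal_plus)
qed

lemma orlicz_norm_le_split:
  assumes young: "young_function \<phi>" and B: "B \<in> sets lebesgue"
    and w: "w \<in> borel_measurable lebesgue" and "0 \<le> a" "0 \<le> b"
    and k: "\<And>x. k x \<le> ennreal a * (w x * indicator (- B) x) + ennreal b * indicator B x"
  shows "orlicz_norm \<phi> UNIV k \<le> ennreal a * orlicz_norm \<phi> (- B) w + ennreal b * orlicz_norm \<phi> UNIV (indicator B)"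
proof -
  have "orlicz_norm \<phi> UNIV k
      \<le> orlicz_norm \<phi> UNIV (\<lambda>x. ennreal a * (w x * indicator (- B) x) + ennreal b * indicator B x)"
    using k by (intro orlicz_norm_mono young_function_mono[OF young])
  also have "\<dots> \<le> orlicz_norm \<phi> UNIV (\<lambda>x. ennreal a * (w x * indicator (- B) x))
      + orlicz_norm \<phi> UNIV (\<lambda>x. ennreal b * indicator B x)"
    using w B by (intro orlicz_norm_add_le[OF young]) simp_all
  also have "\<dots> \<le> ennreal a * orlicz_norm \<phi> UNIV (\<lambda>x. w x * indicator (- B) x)
      + ennreal b * orlicz_norm \<phi> UNIV (indicator B)"
    using assms(4,5) by (intro add_mono orlicz_norm_cmult_le[OF young]) simp_all
  also have "\<dots> = ennreal a * orlicz_norm \<phi> (- B) w + ennreal b * orlicz_norm \<phi> UNIV (indicator B)"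
    using orlicz_norm_restrict[of \<phi> "- B" w, OF young_function_zero[OF young]] by simp
  finally show ?thesis .
qed

lemma nn_integral_young_indicator:
  assumes "\<phi> 0 = 0" "F \<in> sets lebesgue"
  shows "(\<integral>\<^sup>+ x. \<phi> (ennreal q * indicator F x) * indicator UNIV x \<partial>lebesgue) = \<phi> (ennreal q) * emeasure lebesgue F"
proof -
  have "(\<integral>\<^sup>+ x. \<phi> (ennreal q * indicator F x) * indicator UNIV x \<partial>lebesgue)
      = (\<integral>\<^sup>+ x. \<phi> (ennreal q) * indicator F x \<partial>lebesgue)"
    using assms(1) by (intro nn_integral_cong) (simp split: split_indicator)
  also have "\<dots> = \<phi> (ennreal q) * emeasure lebesgue F"
    using assms(2) by (rule nn_integral_cmult_indicator)
  finally show ?thesis .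
qed

lemma orlicz_norm_indicator_le_inverse:
  assumes young: "young_function \<phi>" and "bij \<phi>" and inv: "\<And>y. \<psi> (\<phi> y) = y"
    and F: "F \<in> sets lebesgue" "emeasure lebesgue F \<noteq> 0" "emeasure lebesgue F \<noteq> \<infinity>"
  shows "orlicz_norm \<phi> UNIV (indicator F) \<le> inverse (\<psi> (inverse (emeasure lebesgue F)))"
proof -
  define w where "w = inverse (emeasure lebesgue F)"
  obtain s where s: "\<phi> s = w" using bij_is_surj[OF \<open>bij \<phi>\<close>] by (metis surjD)
  obtain y where "\<phi> y = \<infinity>" using bij_is_surj[OF \<open>bij \<phi>\<close>] by (metis surjD)
  then have "\<phi> \<infinity> = \<infinity>"
    using monoD[OF young_function_mono[OF young], of y \<infinity>] by (simp add: top_unique)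
  moreover have "w \<noteq> 0" "w \<noteq> \<infinity>" using F by (simp_all add: w_def)
  ultimately have "s \<noteq> \<infinity>" "s \<noteq> 0" using s young_function_zero[OF young] by auto
  then obtain \<sigma> where \<sigma>: "s = ennreal \<sigma>" "0 < \<sigma>"
    by (cases s rule: ennreal_cases) (auto simp: less_le)
  have "(\<integral>\<^sup>+ x. \<phi> (ennreal (1 / (1 / \<sigma>)) * indicator F x) * indicator UNIV x \<partial>lebesgue) = w * emeasure lebesgue F"
    using nn_integral_young_indicator[of \<phi> F, OF young_function_zero[OF young] F(1)] s \<sigma> by simp
  also have "\<dots> = emeasure lebesgue F / emeasure lebesgue F"
    by (simp add: w_def divide_ennreal_def mult.commute)
  also have "\<dots> = 1"
    using F by (simp add: ennreal_divide_self less_top)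
  finally have "orlicz_admissible \<phi> UNIV (indicator F) (1 / \<sigma>)"
    using \<sigma> by (simp add: orlicz_admissible_def)
  then have "orlicz_norm \<phi> UNIV (indicator F) \<le> ennreal (1 / \<sigma>)"
    by (rule orlicz_norm_le)
  also have "\<dots> = inverse (\<psi> w)"
    using \<sigma> inv[of s] s by (simp add: inverse_ennreal inverse_eq_divide)
  finally show ?thesis by (simp add: w_def)
qed

lemma orlicz_norm_indicator_less_top:
  assumes young: "young_function \<phi>" and s: "0 < s" "\<phi> (ennreal s) < \<infinity>"
    and F: "F \<in> sets lebesgue" "emeasure lebesgue F < \<infinity>"
  shows "orlicz_norm \<phi> UNIV (indicator F) < \<infinity>"
proof -
  have "\<phi> (ennreal s) * emeasure lebesgue F < \<infinity>"
    using s F by (simp add: ennreal_mult_less_top)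
  then obtain M where M: "\<phi> (ennreal s) * emeasure lebesgue F = ennreal M" "0 \<le> M"
    by (cases "\<phi> (ennreal s) * emeasure lebesgue F" rule: ennreal_cases) auto
  define t where "t = 1 / (1 + M)"
  have t: "0 < t" "t \<le> 1" "t * M \<le> 1"
    using M(2) by (auto simp: t_def field_simps)
  have "(\<integral>\<^sup>+ x. \<phi> (ennreal (1 / (1 / (t * s))) * indicator F x) * indicator UNIV x \<partial>lebesgue)
      = \<phi> (ennreal t * ennreal s) * emeasure lebesgue F"
    using nn_integral_young_indicator[of \<phi> F "t * s", OF young_function_zero[OF young] F(1)] t s
    by (simp add: ennreal_mult)
  also have "\<dots> \<le> ennreal t * \<phi> (ennreal s) * emeasure lebesgue F"
    using young_function_scale[OF young, of t] t by (intro mult_right_mono) simp_all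
  also have "\<dots> = ennreal (t * M)"
    using M t by (simp add: mult.assoc ennreal_mult)
  also have "\<dots> \<le> 1"
    using t by simp
  finally have "orlicz_admissible \<phi> UNIV (indicator F) (1 / (t * s))"
    using t s by (simp add: orlicz_admissible_def)
  then have "orlicz_norm \<phi> UNIV (indicator F) \<le> ennreal (1 / (t * s))"
    by (rule orlicz_norm_le)
  then show ?thesis
    using le_less_trans[OF _ ennreal_less_top] by simp
qed

lemma orlicz_norm_less_top_imp_finite_value:
  assumes "mono \<phi>" and fin: "orlicz_norm \<phi> E g < \<infinity>"
    and D: "D \<subseteq> E" "D \<in> sets lebesgue" "emeasure lebesgue D \<noteq> 0"
    and \<delta>: "0 < \<delta>" "\<And>x. x \<in> D \<Longrightarrow> ennreal \<delta> \<le> g x"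
  obtains s where "0 < s" "\<phi> (ennreal s) < \<infinity>"
proof -
  obtain r where r: "orlicz_admissible \<phi> E g r"
    using fin by (rule orlicz_norm_less_top_imp_admissible)
  have "0 < r" using r by (simp add: orlicz_admissible_def)
  have "\<phi> (ennreal (\<delta> / r)) * emeasure lebesgue D = (\<integral>\<^sup>+ x. \<phi> (ennreal (\<delta> / r)) * indicator D x \<partial>lebesgue)"
    using D(2) by (rule nn_integral_cmult_indicator[symmetric])
  also have "\<dots> \<le> (\<integral>\<^sup>+ x. \<phi> (ennreal (1 / r) * g x) * indicator E x \<partial>lebesgue)"
  proof (intro nn_integral_mono)
    fix x
    show "\<phi> (ennreal (\<delta> / r)) * indicator D x \<le> \<phi> (ennreal (1 / r) * g x) * indicator E x"
    proof (cases "x \<in> D")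
      case True
      have "ennreal (\<delta> / r) = ennreal (1 / r) * ennreal \<delta>"
        using \<open>0 < r\<close> \<delta>(1) by (simp add: ennreal_mult[symmetric])
      also have "\<dots> \<le> ennreal (1 / r) * g x"
        using \<delta>(2)[OF True] by (rule mult_left_mono) simp
      finally show ?thesis
        using True D(1) monoD[OF assms(1)] by auto
    qed simp
  qed
  also have "\<dots> \<le> 1"
    using r by (simp add: orlicz_admissible_def)
  finally have "\<phi> (ennreal (\<delta> / r)) < \<infinity>"
    using D(3) by (cases "\<phi> (ennreal (\<delta> / r)) = \<infinity>") (auto simp: ennreal_mult_top top_unique less_top)
  then show ?thesis
    using that[of "\<delta> / r"] \<open>0 < r\<close> \<delta>(1) by simp
qed

section \<open>Lower bounds for the radial minorant\<close>

lemma gamma_minus_ge: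
  assumes "0 \<le> t" "\<And>y. f y < \<xi> \<Longrightarrow> norm y \<le> t"
  shows "\<xi> \<le> gamma_minus f t"
proof -
  have "{x. f x < \<xi>} \<subseteq> cball 0 t"
    using assms(2) by (auto simp: mem_cball_0)
  then have "enc_radius {x. f x < \<xi>} \<le> ennreal t"
    unfolding enc_radius_def using assms(1) by (auto intro!: Inf_lower)
  then show ?thesis
    unfolding gamma_minus_def rho_minus_def by (auto intro: Sup_upper)
qed

lemma check_fun_ge_Inf: "(INF y. f y) \<le> check_fun f x"
  unfolding check_fun_def
  by (rule gamma_minus_ge) (auto simp: not_le[symmetric] intro: INF_lower)

lemma check_fun_ge_radial:
  fixes f :: "'a::euclidean_space \<Rightarrow> ereal"
  assumes "mono_on {0..} g" "\<And>y. r \<le> norm y \<Longrightarrow> ereal (g (norm y)) \<le> f y" "r \<le> norm x"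
  shows "ereal (g (norm x)) \<le> check_fun f x"
  unfolding check_fun_def
proof (rule gamma_minus_ge)
  fix y
  assume fy: "f y < ereal (g (norm x))"
  show "norm y \<le> norm x"
  proof (rule ccontr)
    assume "\<not> norm y \<le> norm x"
    then have "g (norm x) \<le> g (norm y)"
      using mono_onD[OF assms(1)] by simp
    moreover have "ereal (g (norm y)) \<le> f y"
      using assms(2,3) \<open>\<not> norm y \<le> norm x\<close> by simp
    ultimately have "ereal (g (norm x)) \<le> f y"
      by (meson ereal_less_eq(3) order_trans)
    with fy show False by simp
  qed
qed simp

lemma inverse_check_fun_le_Inf:
  "inverse (e2ennreal (check_fun f x - ereal z)) \<le> inverse (e2ennreal ((INF y. f y) - ereal z))"
proof -
  have "(INF y. f y) - ereal z \<le> check_fun f x - ereal z"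
    by (rule ereal_minus_mono[OF check_fun_ge_Inf order_refl])
  then show ?thesis
    by (intro ennreal_inverse_antimono e2ennreal_mono)
qed

lemma inverse_check_fun_le_radial:
  fixes f :: "'a::euclidean_space \<Rightarrow> ereal"
  assumes "mono_on {0..} g" "\<And>y. r \<le> norm y \<Longrightarrow> ereal (g (norm y)) \<le> f y" "r \<le> norm x"
    and "0 < g (norm x)" "2 * z \<le> g (norm x)"
  shows "inverse (e2ennreal (check_fun f x - ereal z)) \<le> 2 * inverse (ennreal (g (norm x)))"
proof -
  have "ereal (g (norm x) / 2) \<le> ereal (g (norm x)) - ereal z"
    using assms(5) by simp
  also have "\<dots> \<le> check_fun f x - ereal z"
    by (rule ereal_minus_mono[OF check_fun_ge_radial[OF assms(1-3)] order_refl])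
  finally have "ennreal (g (norm x) / 2) \<le> e2ennreal (check_fun f x - ereal z)"
    using e2ennreal_mono by fastforce
  then have "inverse (e2ennreal (check_fun f x - ereal z)) \<le> inverse (ennreal (g (norm x) / 2))"
    by (rule ennreal_inverse_antimono)
  also have "\<dots> = ennreal (2 * inverse (g (norm x)))"
    using assms(4) by (subst inverse_ennreal) (simp_all add: field_simps)
  also have "\<dots> = ennreal 2 * ennreal (inverse (g (norm x)))"
    using assms(4) by (intro ennreal_mult) simp_all
  also have "\<dots> = 2 * inverse (ennreal (g (norm x)))"
    using assms(4) by (simp add: inverse_ennreal)
  finally show ?thesis .
qed

section \<open>Power weights\<close>

lemma ball_in_annulus:
  assumes "0 \<le> r"
  obtains x\<^sub>0 :: "'a::euclidean_space" where "ball x\<^sub>0 1 \<subseteq> {x. r \<le> norm x \<and> norm x \<le> r + 2}"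
proof -
  obtain b :: 'a where b: "b \<in> Basis" using nonempty_Basis by blast
  define x\<^sub>0 where "x\<^sub>0 = (r + 1) *\<^sub>R b"
  have "norm x\<^sub>0 = r + 1" using b assms by (simp add: x\<^sub>0_def)
  moreover have "\<bar>norm x - norm x\<^sub>0\<bar> < 1" if "x \<in> ball x\<^sub>0 1" for x
    using that norm_triangle_ineq3[of x x\<^sub>0] by (simp add: dist_norm norm_minus_commute)
  ultimately show ?thesis
    using that[of x\<^sub>0] by fastforce
qed

lemma emeasure_lebesgue_ball_neq_0:
  assumes "0 < r"
  shows "emeasure lebesgue (ball (c::'a::euclidean_space) r) \<noteq> 0"
proof -
  have "emeasure lebesgue (ball c r) = ennreal (unit_ball_vol (real DIM('a)) * r ^ DIM('a))"
    using emeasure_ball[where c = c and r = r] assms by simp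
  moreover have "0 < unit_ball_vol (real DIM('a)) * r ^ DIM('a)"
    using assms by simp
  ultimately show ?thesis
    by (simp add: ennreal_eq_0_iff)
qed

lemma orlicz_norm_indicator_less_top_if_power_weight:
  fixes F :: "'a::euclidean_space set"
  assumes young: "young_function \<phi>" and "0 < c" "0 \<le> \<alpha>" "0 \<le> r"
    and fin: "orlicz_norm \<phi> (- ball 0 r) (\<lambda>x::'a. inverse (ennreal (c * norm x powr \<alpha>))) < \<infinity>"
    and F: "F \<in> sets lebesgue" "emeasure lebesgue F < \<infinity>"
  shows "orlicz_norm \<phi> UNIV (indicator F) < \<infinity>"
proof -
  obtain x\<^sub>0 :: 'a where annulus: "ball x\<^sub>0 1 \<subseteq> {x. r \<le> norm x \<and> norm x \<le> r + 2}"
    using ball_in_annulus[OF \<open>0 \<le> r\<close>] by blast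
  define \<delta> where "\<delta> = inverse (c * (r + 2) powr \<alpha>)"
  have "0 < \<delta>" using assms(2,4) by (simp add: \<delta>_def)
  have bound: "ennreal \<delta> \<le> inverse (ennreal (c * norm x powr \<alpha>))" if "x \<in> ball x\<^sub>0 1" for x
  proof -
    have "c * norm x powr \<alpha> \<le> c * (r + 2) powr \<alpha>"
      using annulus that assms(2,3) by (auto intro!: mult_left_mono powr_mono2)
    then have "inverse (ennreal (c * (r + 2) powr \<alpha>)) \<le> inverse (ennreal (c * norm x powr \<alpha>))"
      by (intro ennreal_inverse_antimono ennreal_leI)
    then show ?thesis
      using assms(2,4) by (simp add: \<delta>_def inverse_ennreal)
  qed
  have "ball x\<^sub>0 1 \<subseteq> - ball 0 r"
    using annulus by auto
  then obtain s where "0 < s" "\<phi> (ennreal s) < \<infinity>"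
    by (rule orlicz_norm_less_top_imp_finite_value[OF young_function_mono[OF young] fin _ _
          emeasure_lebesgue_ball_neq_0 \<open>0 < \<delta>\<close> bound]) simp_all
  then show ?thesis
    using orlicz_norm_indicator_less_top[OF young _ _ F] by blast
qed

lemma inverse_check_fun_le_split:
  fixes f :: "'a::euclidean_space \<Rightarrow> ereal"
  assumes "0 < c" "0 < \<alpha>" "0 < r"
    and outside: "\<forall>x. x \<notin> ball 0 r \<longrightarrow> ereal (c * norm x powr \<alpha>) \<le> f x \<and> 2 * z \<le> c * norm x powr \<alpha>"
  shows "inverse (e2ennreal (check_fun f x - ereal z))
    \<le> ennreal 2 * (inverse (ennreal (c * norm x powr \<alpha>)) * indicator (- ball 0 r) x)
      + inverse (e2ennreal ((INF y. f y) - ereal z)) * indicator (ball 0 r) x"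
proof (cases "x \<in> ball 0 r")
  case True
  then show ?thesis
    using inverse_check_fun_le_Inf[of f x z] by simp
next
  case False
  have "mono_on {0..} (\<lambda>t::real. c * t powr \<alpha>)"
    using assms(1,2) by (auto intro!: mono_onI mult_left_mono powr_mono2)
  moreover have "r \<le> norm x"
    using False by simp
  then have "0 < norm x"
    using assms(3) by linarith
  then have "0 < c * norm x powr \<alpha>"
    using assms(1) by simp
  ultimately have "inverse (e2ennreal (check_fun f x - ereal z)) \<le> 2 * inverse (ennreal (c * norm x powr \<alpha>))"
    using outside False
    by (intro inverse_check_fun_le_radial[where g = "\<lambda>t. c * t powr \<alpha>" and r = r]) auto
  then show ?thesis
    using False by simp
qed

theorem lemma21:
  fixes f :: "'a::euclidean_space \<Rightarrow> ereal"
    and c \<alpha> z r :: real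
    and \<phi> \<psi> :: "ennreal \<Rightarrow> ennreal"
  defines "m \<equiv> (INF x. f x)"
    and "h \<equiv> (\<lambda>x::'a. c * norm x powr \<alpha>)"
    and "B \<equiv> ball (0::'a) r"
  assumes f_range: "\<forall>x. f x \<noteq> -\<infinity>"
    and m_fin: "m > -\<infinity>"
    and c_pos: "c > 0" and alpha_pos: "\<alpha> > 0"
    and f_ge_h: "\<exists>R. \<forall>x. norm x \<ge> R \<longrightarrow> f x \<ge> ereal (h x)"
    and z_lt: "ereal z < m"
    and r_pos: "r > 0"
    and outside: "\<forall>x. x \<notin> B \<longrightarrow> f x \<ge> ereal (h x) \<and> h x \<ge> 2 * z"
    and young: "young_function \<phi>"
  shows "orlicz_norm \<phi> UNIV (\<lambda>x. inverse (e2ennreal (check_fun f x - ereal z)))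
           \<le> 2 * orlicz_norm \<phi> (- B) (\<lambda>x. inverse (ennreal (h x)))
             + inverse (e2ennreal (m - ereal z)) * orlicz_norm \<phi> UNIV (indicator B)
       \<and> ((bij \<phi> \<and> (\<forall>y. \<psi> (\<phi> y) = y)) \<longrightarrow>
           orlicz_norm \<phi> UNIV (\<lambda>x. inverse (e2ennreal (check_fun f x - ereal z)))
           \<le> 2 * orlicz_norm \<phi> (- B) (\<lambda>x. inverse (ennreal (h x)))
             + inverse (e2ennreal (m - ereal z)) * inverse (\<psi> (inverse (emeasure lebesgue B))))
       \<and> (orlicz_norm \<phi> (- B) (\<lambda>x. inverse (ennreal (h x))) < \<infinity> \<longrightarrow>
           orlicz_norm \<phi> UNIV (\<lambda>x. inverse (e2ennreal (check_fun f x - ereal z))) < \<infinity>)"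
proof -
  let ?k = "\<lambda>x. inverse (e2ennreal (check_fun f x - ereal z))"
  let ?w = "\<lambda>x. inverse (ennreal (h x))"
  let ?a = "inverse (e2ennreal (m - ereal z))"
  have "e2ennreal (m - ereal z) \<noteq> 0"
    using z_lt by (cases m) (auto simp: ennreal_eq_0_iff)
  then obtain a where a: "?a = ennreal a" "0 \<le> a"
    by (cases ?a rule: ennreal_cases) auto
  have B: "B \<in> sets lebesgue" "emeasure lebesgue B \<noteq> 0" "emeasure lebesgue B < \<infinity>"
    using emeasure_lebesgue_ball_neq_0[OF r_pos] emeasure_lborel_ball_finite by (auto simp: B_def)
  have "?w \<in> borel_measurable lebesgue"
    unfolding h_def by (intro measurable_completion, subst measurable_lborel2) measurable
  moreover have "?k x \<le> ennreal 2 * (?w x * indicator (- B) x) + ennreal a * indicator B x" for x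
    using inverse_check_fun_le_split[OF c_pos alpha_pos r_pos, of f z x] outside a
    by (simp add: h_def B_def m_def)
  ultimately have main: "orlicz_norm \<phi> UNIV ?k \<le> 2 * orlicz_norm \<phi> (- B) ?w + ?a * orlicz_norm \<phi> UNIV (indicator B)"
    using orlicz_norm_le_split[OF young B(1), where a = 2 and b = a] a by simp
  moreover have "orlicz_norm \<phi> UNIV ?k \<le> 2 * orlicz_norm \<phi> (- B) ?w + ?a * inverse (\<psi> (inverse (emeasure lebesgue B)))"
    if "bij \<phi>" "\<forall>y. \<psi> (\<phi> y) = y"
  proof -
    have "orlicz_norm \<phi> UNIV (indicator B) \<le> inverse (\<psi> (inverse (emeasure lebesgue B)))"
      using that B by (intro orlicz_norm_indicator_le_inverse[OF young]) auto
    with main show ?thesis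
      by (meson add_left_mono mult_left_mono order_trans zero_le)
  qed
  moreover have "orlicz_norm \<phi> UNIV ?k < \<infinity>" if "orlicz_norm \<phi> (- B) ?w < \<infinity>"
  proof -
    have "orlicz_norm \<phi> UNIV (indicator B) < \<infinity>"
      using orlicz_norm_indicator_less_top_if_power_weight[OF young c_pos _ _ that[unfolded h_def B_def] B(1,3)]
        alpha_pos r_pos by simp
    with main that a show ?thesis
      by (simp add: ennreal_mult_less_top le_less_trans)
  qed
  ultimately show ?thesis
    by blast
qed

end
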